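(* Let $K$ be a field of characteristic $0$. Let $m=x_1^{\alpha_1}\cdots x_n^{\alpha_n}$ with $\alpha_i\ge1$ for all $i$, let $d=\alpha_1+\cdots+\alpha_n$, and let $f$ be in the orbit of $m$, i.e., $f(x)=m(A.x)$ for some $A\in GL_n(K)$. Then the centralizer $C(\mathfrak{g}_f)$ is of dimension $n$. Moreover, there is a unique $H\in C(\mathfrak{g}_f)$ such that $\mathrm{Tr}\,H=d$ and $\mathrm{Tr}(HM)=0$ for all $M\in\mathfrak{g}_f$. The matrix $H$ is diagonalizable, its eigenvalues are $(\alpha_1,\ldots,\alpha_n)$, and $C(\mathfrak{g}_f)=\mathfrak{g}_f\oplus\mathrm{Span}(H)$.
   Context: For $P\in K[x_1,\ldots,x_n]$, the Lie algebra $\mathfrak{g}_P$ of $P$ is the Lie algebra of the group of invariants $\{A\in GL_n(K): P(A.x)=P(x)\}$; equivalently, $\mathfrak{g}_P$ is the linear subspace of matrices $A=(a_{ij})\in M_n(K)$ such that $\sum_{i,j\in[n]} a_{ij}\,x_j\,\frac{\partial P}{\partial x_i}=0$. For a set $S\subseteq M_n(K)$, the centralizer $C(S)$ is the linear subspace of matrices commuting with every element of $S$. *)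

theory Defs
  imports "HOL-Analysis.Analysis" "HOL-Library.Poly_Mapping"
begin

type_synonym ('n, 'a) mpoly = "('n \<Rightarrow>\<^sub>0 nat) \<Rightarrow>\<^sub>0 'a"

definition Var :: "'n \<Rightarrow> ('n, 'a::comm_ring_1) mpoly" where
  "Var i = Poly_Mapping.single (Poly_Mapping.single i 1) 1"

definition Const :: "'a::comm_ring_1 \<Rightarrow> ('n, 'a) mpoly" where
  "Const c = Poly_Mapping.single 0 c"

definition pderiv_mp :: "'n \<Rightarrow> ('n, 'a::comm_ring_1) mpoly \<Rightarrow> ('n, 'a) mpoly" where
  "pderiv_mp i p = (\<Sum>m\<in>Poly_Mapping.keys p.
      Poly_Mapping.single (m - Poly_Mapping.single i 1) (of_nat (Poly_Mapping.lookup m i) * Poly_Mapping.lookup p m))"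

definition lin_subst :: "'a::comm_ring_1^'n^'n \<Rightarrow> 'n \<Rightarrow> ('n::finite, 'a) mpoly" where
  "lin_subst A i = (\<Sum>j\<in>UNIV. Const (A $ i $ j) * Var j)"

definition lie_alg :: "('n::finite, 'a::field) mpoly \<Rightarrow> ('a^'n^'n) set" where
  "lie_alg P = {M. (\<Sum>i\<in>UNIV. \<Sum>j\<in>UNIV. Const (M $ i $ j) * Var j * pderiv_mp i P) = 0}"

definition centralizer :: "('a::field^'n^'n) set \<Rightarrow> ('a^'n^'n) set" where
  "centralizer S = {B. \<forall>M\<in>S. B ** M = M ** B}"

definition mscale :: "'a::field \<Rightarrow> 'a^'n^'n \<Rightarrow> 'a^'n^'n" where
  "mscale c M = (\<chi> i j. c * M $ i $ j)"

interpretation mat: vector_space "mscale :: 'a::field \<Rightarrow> 'a^'n^'n \<Rightarrow> 'a^'n^'n"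
  by unfold_locales (auto simp: mscale_def vec_eq_iff algebra_simps)

definition diag_mat :: "('n \<Rightarrow> 'a::semiring_1) \<Rightarrow> 'a^'n^'n" where
  "diag_mat v = (\<chi> i j. if i = j then v i else 0)"

end

theory Submission
  imports Defs
begin

(*
  Write l_k = (A x)_k, so that f = prod_k l_k^alpha_k. For a matrix M the operator
  D_M = sum_ij M_ij x_j d/dx_i is a derivation with D_M l_k = sum_l B_kl l_l, where B = A M A^-1;
  hence D_M f = sum_{k,l} alpha_k B_kl l^(alpha - e_k + e_l). After the substitution x := A^-1 x
  these products become monomials, pairwise distinct except that all diagonal ones equal x^alpha.
  So M lies in g_f iff B is diagonal with sum_k alpha_k B_kk = 0: conjugation by A maps g_f onto
  the hyperplane {diag b. sum_k alpha_k b_k = 0} of the diagonal matrices. As alpha_k + alpha_l <> 0,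
  a matrix commuting with this hyperplane is diagonal, so C(g_f) is the conjugate of the whole
  diagonal algebra. H is the conjugate of diag alpha: it is trace-orthogonal to the hyperplane,
  and it is not in it because sum_k alpha_k^2 <> 0.
*)

section \<open>Polynomial calculus\<close>

definition sum_terms :: "('k \<Rightarrow> 'a::zero \<Rightarrow> 'b::comm_monoid_add) \<Rightarrow> ('k \<Rightarrow>\<^sub>0 'a) \<Rightarrow> 'b" where
  "sum_terms \<phi> p = (\<Sum>m\<in>Poly_Mapping.keys p. \<phi> m (Poly_Mapping.lookup p m))"

locale termwise_additive =
  fixes \<phi> :: "'k \<Rightarrow> 'a::comm_monoid_add \<Rightarrow> 'b::ab_group_add"
  assumes add: "\<phi> m (a + b) = \<phi> m a + \<phi> m b"
begin

lemma zero [simp]: "\<phi> m 0 = 0"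
  using add[of m 0 0] by simp

lemma sum_terms_superset:
  assumes "finite S" "Poly_Mapping.keys p \<subseteq> S"
  shows "sum_terms \<phi> p = (\<Sum>m\<in>S. \<phi> m (Poly_Mapping.lookup p m))"
  unfolding sum_terms_def
  by (rule sum.mono_neutral_left) (use assms in \<open>auto simp: in_keys_iff\<close>)

lemma sum_terms_add: "sum_terms \<phi> (p + q) = sum_terms \<phi> p + sum_terms \<phi> q"
proof -
  let ?S = "Poly_Mapping.keys p \<union> Poly_Mapping.keys q"
  have "sum_terms \<phi> (p + q) = (\<Sum>m\<in>?S. \<phi> m (Poly_Mapping.lookup (p + q) m))"
    by (rule sum_terms_superset) (auto simp: keys_add)
  also have "\<dots> = (\<Sum>m\<in>?S. \<phi> m (Poly_Mapping.lookup p m)) + (\<Sum>m\<in>?S. \<phi> m (Poly_Mapping.lookup q m))"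
    by (simp add: lookup_add add sum.distrib)
  also have "\<dots> = sum_terms \<phi> p + sum_terms \<phi> q"
    by (simp add: sum_terms_superset[symmetric])
  finally show ?thesis .
qed

lemma sum_terms_zero [simp]: "sum_terms \<phi> 0 = 0"
  by (simp add: sum_terms_def)

lemma sum_terms_sum: "sum_terms \<phi> (sum g S) = (\<Sum>x\<in>S. sum_terms \<phi> (g x))"
  by (induction S rule: infinite_finite_induct) (auto simp: sum_terms_add)

lemma sum_terms_single [simp]: "sum_terms \<phi> (Poly_Mapping.single m c) = \<phi> m c"
  by (subst sum_terms_superset[of "{m}"]) auto

end

lemma poly_mapping_sum_single:
  "p = (\<Sum>m\<in>Poly_Mapping.keys p. Poly_Mapping.single m (Poly_Mapping.lookup p m))"
  by (rule poly_mapping_eqI)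
     (auto simp: lookup_sum lookup_single when_def in_keys_iff sum.delta' split: if_splits)

lemma poly_mapping_mult_sum_single:
  fixes p q :: "'k::comm_monoid_add \<Rightarrow>\<^sub>0 'a::comm_semiring_1"
  shows "p * q = (\<Sum>m\<in>Poly_Mapping.keys p. \<Sum>m'\<in>Poly_Mapping.keys q.
     Poly_Mapping.single m (Poly_Mapping.lookup p m) * Poly_Mapping.single m' (Poly_Mapping.lookup q m'))"
  by (subst poly_mapping_sum_single[of p], subst poly_mapping_sum_single[of q]) (simp add: sum_product)

lemma Const_add: "Const (a + b) = Const a + Const b"
  by (simp add: Const_def single_add)

lemma Const_mult: "Const (a * b) = Const a * (Const b :: ('n, 'a::comm_ring_1) mpoly)"
  by (simp add: Const_def mult_single)

lemma Const_0 [simp]: "Const 0 = 0"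
  by (simp add: Const_def)

lemma Const_1 [simp]: "Const 1 = 1"
  by (simp add: Const_def)

lemma Const_of_nat: "Const (of_nat n) = of_nat n"
  by (simp add: Const_def)

lemma Const_sum: "Const (sum g S) = (\<Sum>x\<in>S. Const (g x))"
  by (induction S rule: infinite_finite_induct) (auto simp: Const_add)

lemma Const_mult_single: "Const c * Poly_Mapping.single m 1 = Poly_Mapping.single m c"
  by (simp add: Const_def mult_single)

lemma Var_power: "Var i ^ n = (Poly_Mapping.single (Poly_Mapping.single i n) 1 :: ('n, 'a::comm_ring_1) mpoly)"
  by (induction n) (simp_all add: Var_def mult_single single_add[symmetric] add.commute)

lemma prod_single_one:
  "(\<Prod>x\<in>S. Poly_Mapping.single (g x) (1::'a::comm_semiring_1)) = Poly_Mapping.single (sum g S) 1"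
  by (induction S rule: infinite_finite_induct) (simp_all add: mult_single)

definition pderiv_term :: "'n \<Rightarrow> ('n \<Rightarrow>\<^sub>0 nat) \<Rightarrow> 'a::comm_ring_1 \<Rightarrow> ('n, 'a) mpoly" where
  "pderiv_term i m c = Poly_Mapping.single (m - Poly_Mapping.single i 1) (of_nat (Poly_Mapping.lookup m i) * c)"

interpretation pderiv_term: termwise_additive "pderiv_term i" for i
  by unfold_locales (simp add: pderiv_term_def distrib_left single_add)

lemma pderiv_mp_eq_sum_terms: "pderiv_mp i p = sum_terms (pderiv_term i) p"
  by (simp add: pderiv_mp_def sum_terms_def pderiv_term_def)

lemma pderiv_mp_add: "pderiv_mp i (p + q) = pderiv_mp i p + pderiv_mp i q"
  by (simp add: pderiv_mp_eq_sum_terms pderiv_term.sum_terms_add)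

lemma pderiv_mp_sum: "pderiv_mp i (sum g S) = (\<Sum>x\<in>S. pderiv_mp i (g x))"
  by (simp add: pderiv_mp_eq_sum_terms pderiv_term.sum_terms_sum)

lemma pderiv_mp_single: "pderiv_mp i (Poly_Mapping.single m c) =
   Poly_Mapping.single (m - Poly_Mapping.single i 1) (of_nat (Poly_Mapping.lookup m i) * c)"
  by (simp add: pderiv_mp_eq_sum_terms pderiv_term_def)

lemma pderiv_mp_Const [simp]: "pderiv_mp i (Const c) = 0"
  by (simp add: Const_def pderiv_mp_single)

lemma pderiv_mp_Var: "pderiv_mp i (Var j) = (if i = j then 1 else 0)"
  by (auto simp: Var_def pderiv_mp_single lookup_single)

lemma diff_single_add_commute:
  assumes "Poly_Mapping.lookup m i \<noteq> 0"
  shows "m + m' - Poly_Mapping.single i 1 = (m - Poly_Mapping.single i (1::nat)) + m'"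
  using assms
  by (auto simp: poly_mapping_eq_iff fun_eq_iff lookup_add lookup_minus lookup_single when_def)

lemma pderiv_mp_single_mult:
  "pderiv_mp i (Poly_Mapping.single m a * Poly_Mapping.single m' b) =
    pderiv_mp i (Poly_Mapping.single m a) * Poly_Mapping.single m' b +
    Poly_Mapping.single m a * pderiv_mp i (Poly_Mapping.single m' (b::'a::comm_ring_1))"
proof -
  let ?e = "Poly_Mapping.single i (1::nat)"
  have left: "Poly_Mapping.single (m + m' - ?e) (of_nat (Poly_Mapping.lookup m i) * (a * b))
     = pderiv_mp i (Poly_Mapping.single m a) * Poly_Mapping.single m' b"
  proof (cases "Poly_Mapping.lookup m i = 0")
    case False
    then have "m + m' - ?e = (m - ?e) + m'"
      by (rule diff_single_add_commute)
    then show ?thesis by (simp add: pderiv_mp_single mult_single mult.assoc)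
  qed (simp add: pderiv_mp_single)
  have right: "Poly_Mapping.single (m + m' - ?e) (of_nat (Poly_Mapping.lookup m' i) * (a * b))
     = Poly_Mapping.single m a * pderiv_mp i (Poly_Mapping.single m' b)"
  proof (cases "Poly_Mapping.lookup m' i = 0")
    case False
    then have "m + m' - ?e = m + (m' - ?e)"
      using diff_single_add_commute[of m' i m] by (simp add: add.commute)
    then show ?thesis by (simp add: pderiv_mp_single mult_single algebra_simps)
  qed (simp add: pderiv_mp_single)
  show ?thesis
    unfolding left[symmetric] right[symmetric]
    by (simp add: mult_single pderiv_mp_single lookup_add distrib_right single_add)
qed

lemma pderiv_mp_mult: "pderiv_mp i (p * q) = pderiv_mp i p * q + p * pderiv_mp i (q :: ('n, 'a::comm_ring_1) mpoly)"
proof -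
  let ?P = "\<lambda>m. Poly_Mapping.single m (Poly_Mapping.lookup p m)"
  let ?Q = "\<lambda>m. Poly_Mapping.single m (Poly_Mapping.lookup q m)"
  have "pderiv_mp i (p * q) = (\<Sum>m\<in>Poly_Mapping.keys p. \<Sum>m'\<in>Poly_Mapping.keys q.
      pderiv_mp i (?P m) * ?Q m' + ?P m * pderiv_mp i (?Q m'))"
    by (simp add: poly_mapping_mult_sum_single[of p q] pderiv_mp_sum pderiv_mp_single_mult)
  also have "\<dots> = pderiv_mp i (\<Sum>m\<in>Poly_Mapping.keys p. ?P m) * (\<Sum>m'\<in>Poly_Mapping.keys q. ?Q m')
     + (\<Sum>m\<in>Poly_Mapping.keys p. ?P m) * pderiv_mp i (\<Sum>m'\<in>Poly_Mapping.keys q. ?Q m')"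
    by (simp add: pderiv_mp_sum sum.distrib sum_product)
  finally show ?thesis
    by (simp only: poly_mapping_sum_single[symmetric])
qed

definition monom_subst :: "('n::finite \<Rightarrow> ('n, 'a::comm_ring_1) mpoly) \<Rightarrow> ('n \<Rightarrow>\<^sub>0 nat) \<Rightarrow> ('n, 'a) mpoly" where
  "monom_subst \<sigma> m = (\<Prod>i\<in>UNIV. \<sigma> i ^ Poly_Mapping.lookup m i)"

definition subst_mp :: "('n::finite \<Rightarrow> ('n, 'a::comm_ring_1) mpoly) \<Rightarrow> ('n, 'a) mpoly \<Rightarrow> ('n, 'a) mpoly" where
  "subst_mp \<sigma> p = sum_terms (\<lambda>m c. Const c * monom_subst \<sigma> m) p"

interpretation subst_term: termwise_additive "\<lambda>m c. Const c * monom_subst \<sigma> m" for \<sigma>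
  by unfold_locales (simp add: Const_add distrib_right)

lemma monom_subst_zero [simp]: "monom_subst \<sigma> 0 = 1"
  by (simp add: monom_subst_def)

lemma monom_subst_add: "monom_subst \<sigma> (m + m') = monom_subst \<sigma> m * monom_subst \<sigma> m'"
  by (simp add: monom_subst_def lookup_add power_add prod.distrib)

lemma subst_mp_sum: "subst_mp \<sigma> (sum g S) = (\<Sum>x\<in>S. subst_mp \<sigma> (g x))"
  by (simp add: subst_mp_def subst_term.sum_terms_sum)

lemma subst_mp_zero [simp]: "subst_mp \<sigma> 0 = 0"
  by (simp add: subst_mp_def)

lemma subst_mp_single: "subst_mp \<sigma> (Poly_Mapping.single m c) = Const c * monom_subst \<sigma> m"
  by (simp add: subst_mp_def)

lemma subst_mp_mult: "subst_mp \<sigma> (p * q) = subst_mp \<sigma> p * subst_mp \<sigma> q"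
proof -
  let ?P = "\<lambda>m. Poly_Mapping.single m (Poly_Mapping.lookup p m)"
  let ?Q = "\<lambda>m. Poly_Mapping.single m (Poly_Mapping.lookup q m)"
  have single_mult: "subst_mp \<sigma> (?P m * ?Q m') = subst_mp \<sigma> (?P m) * subst_mp \<sigma> (?Q m')" for m m'
    by (simp add: mult_single subst_mp_single monom_subst_add Const_mult algebra_simps)
  have "subst_mp \<sigma> (p * q) = (\<Sum>m\<in>Poly_Mapping.keys p. subst_mp \<sigma> (?P m)) * (\<Sum>m'\<in>Poly_Mapping.keys q. subst_mp \<sigma> (?Q m'))"
    by (simp add: poly_mapping_mult_sum_single[of p q] subst_mp_sum single_mult sum_product)
  then show ?thesis
    by (simp only: subst_mp_sum[symmetric] poly_mapping_sum_single[symmetric])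
qed

lemma subst_mp_Const [simp]: "subst_mp \<sigma> (Const c) = Const c"
  by (simp add: Const_def subst_mp_single)

lemma subst_mp_Var [simp]: "subst_mp \<sigma> (Var j) = \<sigma> j"
proof -
  have "monom_subst \<sigma> (Poly_Mapping.single j 1) = (\<Prod>i\<in>UNIV. if i = j then \<sigma> i else 1)"
    unfolding monom_subst_def by (rule prod.cong) (auto simp: lookup_single)
  then show ?thesis by (simp add: Var_def subst_mp_single)
qed

lemma subst_mp_power: "subst_mp \<sigma> (p ^ n) = subst_mp \<sigma> p ^ n"
  using subst_mp_Const[of \<sigma> 1] by (induction n) (simp_all add: subst_mp_mult)

lemma subst_mp_prod: "subst_mp \<sigma> (prod g S) = (\<Prod>x\<in>S. subst_mp \<sigma> (g x))"
  using subst_mp_Const[of \<sigma> 1] by (induction S rule: infinite_finite_induct) (simp_all add: subst_mp_mult)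

definition lie_deriv :: "'a::comm_ring_1^'n^'n \<Rightarrow> ('n::finite, 'a) mpoly \<Rightarrow> ('n, 'a) mpoly" where
  "lie_deriv M p = (\<Sum>i\<in>UNIV. \<Sum>j\<in>UNIV. Const (M $ i $ j) * Var j * pderiv_mp i p)"

lemma mem_lie_alg_iff: "M \<in> lie_alg P \<longleftrightarrow> lie_deriv M P = 0"
  by (simp add: lie_alg_def lie_deriv_def)

lemma lie_deriv_add: "lie_deriv M (p + q) = lie_deriv M p + lie_deriv M q"
  by (simp add: lie_deriv_def pderiv_mp_add algebra_simps sum.distrib)

lemma lie_deriv_zero [simp]: "lie_deriv M 0 = 0"
  by (simp add: lie_deriv_def pderiv_mp_def)

lemma lie_deriv_sum: "lie_deriv M (sum g S) = (\<Sum>x\<in>S. lie_deriv M (g x))"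
  by (induction S rule: infinite_finite_induct) (simp_all add: lie_deriv_add)

lemma lie_deriv_mult: "lie_deriv M (p * q) = lie_deriv M p * q + p * lie_deriv M q"
  by (simp add: lie_deriv_def pderiv_mp_mult algebra_simps sum.distrib sum_distrib_left sum_distrib_right)

lemma lie_deriv_Const [simp]: "lie_deriv M (Const c) = 0"
  by (simp add: lie_deriv_def)

lemma lie_deriv_power: "lie_deriv M (p ^ n) = of_nat n * p ^ (n - 1) * lie_deriv M p"
proof (induction n)
  case 0
  then show ?case using lie_deriv_Const[of M 1] by simp
next
  case (Suc n)
  then show ?case by (cases n) (simp_all add: lie_deriv_mult algebra_simps)
qed

lemma lie_deriv_prod:
  assumes "finite S"
  shows "lie_deriv M (prod g S) = (\<Sum>k\<in>S. lie_deriv M (g k) * prod g (S - {k}))"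
  using assms
proof (induction S rule: finite_induct)
  case empty
  then show ?case using lie_deriv_Const[of M 1] by simp
next
  case (insert x F)
  have "prod g (insert x F - {k}) = g x * prod g (F - {k})" if "k \<in> F" for k
  proof -
    have "insert x F - {k} = insert x (F - {k})"
      using insert.hyps that by auto
    then show ?thesis using insert.hyps by simp
  qed
  then have "g x * lie_deriv M (prod g F) = (\<Sum>k\<in>F. lie_deriv M (g k) * prod g (insert x F - {k}))"
    by (simp add: insert.IH sum_distrib_left algebra_simps)
  with insert.hyps show ?case
    by (simp add: lie_deriv_mult)
qed

lemma lie_deriv_Var: "lie_deriv M (Var j) = (\<Sum>i\<in>UNIV. Const (M $ j $ i) * Var i)"
  by (simp add: lie_deriv_def pderiv_mp_Var if_distrib cong: if_cong) (subst sum.swap, simp)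

lemma lie_deriv_lin_subst: "lie_deriv M (lin_subst A k) = lin_subst (A ** M) k"
proof -
  have "lie_deriv M (lin_subst A k) = (\<Sum>j\<in>UNIV. \<Sum>i\<in>UNIV. Const (A $ k $ j * M $ j $ i) * Var i)"
    by (simp add: lin_subst_def lie_deriv_sum lie_deriv_mult lie_deriv_Var sum_distrib_left Const_mult mult.assoc)
  also have "\<dots> = lin_subst (A ** M) k"
    by (subst sum.swap) (simp add: lin_subst_def matrix_matrix_mult_def Const_sum sum_distrib_right)
  finally show ?thesis .
qed

lemma lin_subst_matrix_mult: "lin_subst (B ** A) k = (\<Sum>l\<in>UNIV. Const (B $ k $ l) * lin_subst A l)"
proof -
  have "lin_subst (B ** A) k = (\<Sum>j\<in>UNIV. \<Sum>l\<in>UNIV. Const (B $ k $ l * A $ l $ j) * Var j)"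
    by (simp add: lin_subst_def matrix_matrix_mult_def Const_sum sum_distrib_right)
  also have "\<dots> = (\<Sum>l\<in>UNIV. Const (B $ k $ l) * lin_subst A l)"
    by (subst sum.swap) (simp add: lin_subst_def sum_distrib_left Const_mult mult.assoc)
  finally show ?thesis .
qed

lemma lin_subst_mat_1: "lin_subst (mat 1) k = Var k"
proof -
  have entry: "Const (mat 1 $ k $ j) * Var j = (if j = k then Var j else 0)" for j
    by (simp add: mat_def)
  show ?thesis
    unfolding lin_subst_def entry by simp
qed

lemma subst_mp_lin_subst: "subst_mp (lin_subst C) (lin_subst A k) = lin_subst (A ** C) k"
  unfolding lin_subst_matrix_mult by (simp add: lin_subst_def[of A] subst_mp_sum subst_mp_mult)

section \<open>Matrix inverses, diagonal matrices and conjugation\<close>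

lemma matrix_inv_right: "invertible A \<Longrightarrow> A ** matrix_inv A = mat 1"
  and matrix_inv_left: "invertible A \<Longrightarrow> matrix_inv A ** A = mat 1"
  unfolding invertible_def matrix_inv_def by (metis (mono_tags, lifting) someI_ex)+

lemma matrix_inv_unique:
  fixes A B :: "'a::semiring_1^'n^'n"
  assumes "A ** B = mat 1" "B ** A = mat 1"
  shows "matrix_inv A = B"
proof -
  have "invertible A" using assms unfolding invertible_def by blast
  then have "matrix_inv A = matrix_inv A ** (A ** B)" by (simp add: assms)
  also have "\<dots> = B" by (simp add: matrix_mul_assoc matrix_inv_left \<open>invertible A\<close>)
  finally show ?thesis .
qed

lemma invertible_matrix_inv:
  fixes A :: "'a::semiring_1^'n^'n"
  shows "invertible A \<Longrightarrow> invertible (matrix_inv A)"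
  using matrix_inv_left matrix_inv_right invertible_def by blast

lemma matrix_inv_matrix_inv:
  fixes A :: "'a::semiring_1^'n^'n"
  shows "invertible A \<Longrightarrow> matrix_inv (matrix_inv A) = A"
  by (rule matrix_inv_unique) (simp_all add: matrix_inv_left matrix_inv_right)

definition is_diagonal :: "'a::zero^'n^'n \<Rightarrow> bool" where
  "is_diagonal X \<longleftrightarrow> (\<forall>k l. k \<noteq> l \<longrightarrow> X $ k $ l = 0)"

lemma diag_mat_mult_left: "(diag_mat v ** X) $ i $ j = v i * X $ i $ j"
  by (simp add: diag_mat_def matrix_matrix_mult_def if_distrib if_distribR cong: if_cong)

lemma diag_mat_mult_right: "(X ** diag_mat v) $ i $ j = X $ i $ j * (v j :: 'a::semiring_1)"
  by (simp add: diag_mat_def matrix_matrix_mult_def if_distrib cong: if_cong)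

lemma diag_mat_mult_diag_mat: "diag_mat v ** diag_mat w = diag_mat (\<lambda>i. v i * w i)"
  by (simp add: vec_eq_iff diag_mat_mult_left) (simp add: diag_mat_def)

lemma diag_mat_zero [simp]: "diag_mat (\<lambda>i. 0) = 0"
  by (simp add: diag_mat_def vec_eq_iff)

lemma diag_mat_add: "diag_mat v + diag_mat w = diag_mat (\<lambda>i. v i + w i)"
  by (simp add: vec_eq_iff diag_mat_def)

lemma sum_diag_mat: "(\<Sum>x\<in>S. diag_mat (F x)) = diag_mat (\<lambda>i. \<Sum>x\<in>S. F x i)"
  by (induction S rule: infinite_finite_induct) (simp_all add: diag_mat_add)

lemma mscale_diag_mat: "mscale c (diag_mat v) = diag_mat (\<lambda>i. c * v i)"
  by (simp add: vec_eq_iff mscale_def diag_mat_def)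

lemma diag_mat_eq_iff: "diag_mat v = diag_mat w \<longleftrightarrow> v = w"
  by (auto simp: vec_eq_iff diag_mat_def fun_eq_iff)

lemma trace_diag_mat: "trace (diag_mat v) = sum v UNIV"
  by (simp add: trace_def diag_mat_def)

lemma is_diagonal_iff_diag_mat: "is_diagonal X \<longleftrightarrow> X = diag_mat (\<lambda>i. X $ i $ i)"
  by (auto simp: is_diagonal_def vec_eq_iff diag_mat_def)

lemma is_diagonal_diag_mat [simp]: "is_diagonal (diag_mat v)"
  by (simp add: is_diagonal_def diag_mat_def)

lemma matrix_add_rdistrib: "(B + C) ** A = B ** A + C ** (A :: 'a::semiring_1^'n^'n)"
  by (simp add: vec_eq_iff matrix_matrix_mult_def distrib_right sum.distrib)

lemma mscale_matrix_mult_left: "mscale c X ** Y = mscale c (X ** (Y :: 'a::field^'n^'n))"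
  by (simp add: vec_eq_iff matrix_matrix_mult_def mscale_def sum_distrib_left mult.assoc)

lemma mscale_matrix_mult_right: "X ** mscale c Y = mscale c (X ** (Y :: 'a::field^'n^'n))"
  by (simp add: vec_eq_iff matrix_matrix_mult_def mscale_def sum_distrib_left algebra_simps)

definition conjugate :: "'a::field^'n^'n \<Rightarrow> 'a^'n^'n \<Rightarrow> 'a^'n^'n" where
  "conjugate P X = P ** X ** matrix_inv P"

lemma conjugate_mult:
  "invertible P \<Longrightarrow> conjugate P (X ** Y) = conjugate P X ** conjugate P Y"
  by (simp add: conjugate_def matrix_mul_assoc)
     (simp add: matrix_mul_assoc[symmetric] matrix_inv_left)

lemma conjugate_mult_self: "invertible P \<Longrightarrow> conjugate P X ** P = P ** X"
  by (simp add: conjugate_def matrix_mul_assoc[symmetric] matrix_inv_left)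

lemma conjugate_add: "conjugate P (X + Y) = conjugate P X + conjugate P Y"
  by (simp add: conjugate_def matrix_add_ldistrib matrix_add_rdistrib)

lemma conjugate_mscale: "conjugate P (mscale c X) = mscale c (conjugate P X)"
  by (simp add: conjugate_def mscale_matrix_mult_left mscale_matrix_mult_right)

lemma conjugate_zero [simp]: "conjugate P 0 = 0"
  by (simp add: conjugate_def)

lemma conjugate_sum: "conjugate P (sum F S) = (\<Sum>x\<in>S. conjugate P (F x))"
  by (induction S rule: infinite_finite_induct) (simp_all add: conjugate_add)

lemma conjugate_conjugate_inv:
  "invertible P \<Longrightarrow> conjugate P (conjugate (matrix_inv P) X) = X"
  by (simp add: conjugate_def matrix_inv_matrix_inv matrix_mul_assoc)
     (simp add: matrix_mul_assoc[symmetric] matrix_inv_right)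

lemma conjugate_inv_conjugate:
  assumes "invertible P"
  shows "conjugate (matrix_inv P) (conjugate P X) = X"
  using conjugate_conjugate_inv[OF invertible_matrix_inv[OF assms]] by (simp add: matrix_inv_matrix_inv assms)

lemma trace_conjugate: "invertible P \<Longrightarrow> trace (conjugate P X) = trace X"
  unfolding conjugate_def
  by (subst trace_mul_sym) (simp add: matrix_mul_assoc matrix_inv_left)

section \<open>The Lie algebra of a product of powers of linear forms\<close>

definition shifted_exponent :: "('n::finite \<Rightarrow> nat) \<Rightarrow> 'n \<Rightarrow> 'n \<Rightarrow> ('n \<Rightarrow>\<^sub>0 nat)" where
  "shifted_exponent \<alpha> k l = Poly_Mapping.single k (\<alpha> k - 1) + Poly_Mapping.single l 1
     + (\<Sum>k'\<in>UNIV - {k}. Poly_Mapping.single k' (\<alpha> k'))"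

lemma lookup_shifted_exponent:
  assumes "\<alpha> k \<ge> 1"
  shows "Poly_Mapping.lookup (shifted_exponent \<alpha> k l) i = \<alpha> i + (if i = l then 1 else 0) - (if i = k then 1 else 0)"
proof -
  have "Poly_Mapping.lookup (\<Sum>k'\<in>UNIV - {k}. Poly_Mapping.single k' (\<alpha> k')) i = (if i = k then 0 else \<alpha> i)"
    by (simp add: lookup_sum lookup_single when_def)
  then show ?thesis
    using assms by (simp add: shifted_exponent_def lookup_add lookup_single when_def)
qed

lemma shifted_exponent_eq_iff:
  assumes "\<forall>i. \<alpha> i \<ge> 1"
  shows "shifted_exponent \<alpha> k l = shifted_exponent \<alpha> k' l' \<longleftrightarrow> (k = l \<and> k' = l') \<or> (k = k' \<and> l = l')"
proof
  assume "shifted_exponent \<alpha> k l = shifted_exponent \<alpha> k' l'"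
  then have lookup_eq: "\<alpha> i + (if i = l then 1 else 0) - (if i = k then 1 else 0)
      = \<alpha> i + (if i = l' then 1 else 0) - (if i = k' then 1 else 0)" for i
    using assms by (metis lookup_shifted_exponent)
  show "(k = l \<and> k' = l') \<or> (k = k' \<and> l = l')"
  proof (cases "k = l")
    case True
    then show ?thesis
      using lookup_eq[of k'] assms[rule_format, of k'] by (cases "k' = l'"; cases "k' = k") auto
  next
    case False
    have "k = k'"
      using lookup_eq[of k] assms[rule_format, of k] False by (cases "k = l'"; cases "k = k'") auto
    moreover have "l = l'"
      using lookup_eq[of l] assms[rule_format, of l] False \<open>k = k'\<close> by (cases "l = l'") auto
    ultimately show ?thesis by simp
  qed
next
  assume "(k = l \<and> k' = l') \<or> (k = k' \<and> l = l')"
  then show "shifted_exponent \<alpha> k l = shifted_exponent \<alpha> k' l'"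
    using assms by (auto simp: poly_mapping_eq_iff fun_eq_iff lookup_shifted_exponent)
qed

lemma sum_shifted_monomials_eq_0:
  assumes "\<forall>i. \<alpha> i \<ge> 1"
    and "(\<Sum>k\<in>UNIV. \<Sum>l\<in>UNIV. Poly_Mapping.single (shifted_exponent \<alpha> k l) (c k l)) = (0::('n::finite \<Rightarrow>\<^sub>0 nat) \<Rightarrow>\<^sub>0 'a::comm_monoid_add)"
  shows "\<forall>k l. k \<noteq> l \<longrightarrow> c k l = 0" and "(\<Sum>k\<in>UNIV. c k k) = 0"
proof -
  have coeff: "(\<Sum>k\<in>UNIV. \<Sum>l\<in>UNIV. if shifted_exponent \<alpha> k l = shifted_exponent \<alpha> k0 l0 then c k l else 0) = 0"
    for k0 l0
    using arg_cong[OF assms(2), of "\<lambda>p. Poly_Mapping.lookup p (shifted_exponent \<alpha> k0 l0)"]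
    by (simp add: lookup_sum lookup_single when_def)
  show "\<forall>k l. k \<noteq> l \<longrightarrow> c k l = 0"
  proof (intro allI impI)
    fix k0 l0 :: 'n
    assume "k0 \<noteq> l0"
    then have "(\<Sum>k\<in>UNIV. \<Sum>l\<in>UNIV. if shifted_exponent \<alpha> k l = shifted_exponent \<alpha> k0 l0 then c k l else 0)
        = (\<Sum>k\<in>UNIV. if k = k0 then (\<Sum>l\<in>UNIV. if l = l0 then c k l else 0) else 0)"
      by (intro sum.cong refl) (auto simp: shifted_exponent_eq_iff[OF assms(1)] intro!: sum.neutral)
    then show "c k0 l0 = 0"
      using coeff[of k0 l0] by simp
  qed
  obtain k0 :: 'n where True by simp
  have "(\<Sum>k\<in>UNIV. \<Sum>l\<in>UNIV. if shifted_exponent \<alpha> k l = shifted_exponent \<alpha> k0 k0 then c k l else 0)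
      = (\<Sum>k\<in>UNIV. \<Sum>l\<in>UNIV. if l = k then c k l else 0)"
    by (intro sum.cong refl) (auto simp: shifted_exponent_eq_iff[OF assms(1)])
  then show "(\<Sum>k\<in>UNIV. c k k) = 0"
    using coeff[of k0 k0] by simp
qed

lemma lie_deriv_prod_lin_subst:
  assumes "A ** M = B ** A"
  shows "lie_deriv M (\<Prod>k\<in>UNIV. lin_subst A k ^ \<alpha> k) =
    (\<Sum>k\<in>UNIV. \<Sum>l\<in>UNIV. Const (of_nat (\<alpha> k) * B $ k $ l) *
       (lin_subst A k ^ (\<alpha> k - 1) * lin_subst A l * (\<Prod>k'\<in>UNIV - {k}. lin_subst A k' ^ \<alpha> k')))"
  by (simp add: lie_deriv_prod lie_deriv_power lie_deriv_lin_subst assms lin_subst_matrix_mult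
      Const_mult Const_of_nat sum_distrib_left sum_distrib_right mult_ac)

lemma lie_deriv_prod_lin_subst_diagonal:
  assumes "A ** M = B ** A" "is_diagonal B"
  shows "lie_deriv M (\<Prod>k\<in>UNIV. lin_subst A k ^ \<alpha> k) =
    Const (\<Sum>k\<in>UNIV. of_nat (\<alpha> k) * B $ k $ k) * (\<Prod>k\<in>UNIV. lin_subst A k ^ \<alpha> k)"
proof -
  let ?l = "lin_subst A" and ?f = "\<Prod>k\<in>UNIV. lin_subst A k ^ \<alpha> k"
  have summand: "(\<Sum>l\<in>UNIV. Const (of_nat (\<alpha> k) * B $ k $ l) *
       (?l k ^ (\<alpha> k - 1) * ?l l * (\<Prod>k'\<in>UNIV - {k}. ?l k' ^ \<alpha> k')))
     = Const (of_nat (\<alpha> k) * B $ k $ k) * ?f" for k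
  proof (cases "\<alpha> k = 0")
    case False
    have "?l k ^ (\<alpha> k - 1) * ?l k = ?l k ^ \<alpha> k"
      using False by (intro power_minus_mult) simp
    then have "?l k ^ (\<alpha> k - 1) * ?l k * (\<Prod>k'\<in>UNIV - {k}. ?l k' ^ \<alpha> k') = ?f"
      by (simp add: prod.remove[of UNIV k])
    moreover have "B $ k $ l = 0" if "l \<noteq> k" for l
      using assms(2) that by (simp add: is_diagonal_def)
    then have "(\<Sum>l\<in>UNIV. Const (of_nat (\<alpha> k) * B $ k $ l) *
        (?l k ^ (\<alpha> k - 1) * ?l l * (\<Prod>k'\<in>UNIV - {k}. ?l k' ^ \<alpha> k')))
      = Const (of_nat (\<alpha> k) * B $ k $ k) * (?l k ^ (\<alpha> k - 1) * ?l k * (\<Prod>k'\<in>UNIV - {k}. ?l k' ^ \<alpha> k'))"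
      by (subst sum.mono_neutral_right[of UNIV "{k}"]) auto
    ultimately show ?thesis
      by simp
  qed simp
  show ?thesis
    unfolding lie_deriv_prod_lin_subst[OF assms(1)] summand by (simp add: Const_sum sum_distrib_right)
qed

lemma subst_mp_shifted_monomial:
  assumes "A ** C = mat 1"
  shows "subst_mp (lin_subst C) (lin_subst A k ^ (\<alpha> k - 1) * lin_subst A l * (\<Prod>k'\<in>UNIV - {k}. lin_subst A k' ^ \<alpha> k'))
    = Poly_Mapping.single (shifted_exponent \<alpha> k l) 1"
  by (simp add: subst_mp_mult subst_mp_power subst_mp_prod subst_mp_lin_subst assms lin_subst_mat_1
      Var_power prod_single_one shifted_exponent_def mult_single) (simp add: Var_def mult_single)

lemma subst_mp_lie_deriv_prod_lin_subst:
  assumes "A ** M = B ** A" "A ** C = mat 1"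
  shows "subst_mp (lin_subst C) (lie_deriv M (\<Prod>k\<in>UNIV. lin_subst A k ^ \<alpha> k)) =
    (\<Sum>k\<in>UNIV. \<Sum>l\<in>UNIV. Poly_Mapping.single (shifted_exponent \<alpha> k l) (of_nat (\<alpha> k) * B $ k $ l))"
proof -
  have "subst_mp (lin_subst C) (lie_deriv M (\<Prod>k\<in>UNIV. lin_subst A k ^ \<alpha> k)) =
    (\<Sum>k\<in>UNIV. \<Sum>l\<in>UNIV. Const (of_nat (\<alpha> k) * B $ k $ l) * subst_mp (lin_subst C)
       (lin_subst A k ^ (\<alpha> k - 1) * lin_subst A l * (\<Prod>k'\<in>UNIV - {k}. lin_subst A k' ^ \<alpha> k')))"
    by (simp only: lie_deriv_prod_lin_subst[OF assms(1)] subst_mp_sum subst_mp_mult[of _ "Const _"] subst_mp_Const)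
  then show ?thesis
    by (simp only: subst_mp_shifted_monomial[OF assms(2)] Const_mult_single)
qed

theorem lie_alg_prod_lin_subst_iff:
  fixes A M :: "'a::field_char_0^'n::finite^'n"
  assumes alpha: "\<forall>i. \<alpha> i \<ge> 1" and "invertible A"
  shows "M \<in> lie_alg (\<Prod>k\<in>UNIV. lin_subst A k ^ \<alpha> k) \<longleftrightarrow>
    is_diagonal (conjugate A M) \<and> (\<Sum>k\<in>UNIV. of_nat (\<alpha> k) * conjugate A M $ k $ k) = 0"
    (is "_ \<longleftrightarrow> is_diagonal ?B \<and> _")
proof
  have AM: "A ** M = ?B ** A"
    by (simp add: conjugate_mult_self \<open>invertible A\<close>)
  assume "M \<in> lie_alg (\<Prod>k\<in>UNIV. lin_subst A k ^ \<alpha> k)"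
  then have "(\<Sum>k\<in>UNIV. \<Sum>l\<in>UNIV. Poly_Mapping.single (shifted_exponent \<alpha> k l) (of_nat (\<alpha> k) * ?B $ k $ l)) = 0"
    using subst_mp_lie_deriv_prod_lin_subst[OF AM matrix_inv_right[OF \<open>invertible A\<close>], where \<alpha> = \<alpha>]
    by (simp add: mem_lie_alg_iff)
  note coefficients = sum_shifted_monomials_eq_0[OF alpha this]
  have "\<alpha> k \<noteq> 0" for k
    using alpha[rule_format, of k] by simp
  with coefficients show "is_diagonal ?B \<and> (\<Sum>k\<in>UNIV. of_nat (\<alpha> k) * ?B $ k $ k) = 0"
    unfolding is_diagonal_def by (metis mult_eq_0_iff of_nat_eq_0_iff)
next
  have AM: "A ** M = ?B ** A"
    by (simp add: conjugate_mult_self \<open>invertible A\<close>)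
  assume "is_diagonal ?B \<and> (\<Sum>k\<in>UNIV. of_nat (\<alpha> k) * ?B $ k $ k) = 0"
  then show "M \<in> lie_alg (\<Prod>k\<in>UNIV. lin_subst A k ^ \<alpha> k)"
    by (simp add: mem_lie_alg_iff lie_deriv_prod_lin_subst_diagonal[OF AM])
qed

section \<open>The centralizer\<close>

locale linear_form_power_product =
  fixes A :: "'a::field_char_0^'n::finite^'n" and \<alpha> :: "'n \<Rightarrow> nat"
  assumes alpha_pos: "\<forall>i. \<alpha> i \<ge> 1" and invertible_A: "invertible A"
begin

abbreviation weight :: "'n \<Rightarrow> 'a" where
  "weight i \<equiv> of_nat (\<alpha> i)"

abbreviation g :: "('a^'n^'n) set" where
  "g \<equiv> lie_alg (\<Prod>k\<in>UNIV. lin_subst A k ^ \<alpha> k)"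

abbreviation from_diag :: "('n \<Rightarrow> 'a) \<Rightarrow> 'a^'n^'n" where
  "from_diag v \<equiv> conjugate (matrix_inv A) (diag_mat v)"

definition H_alpha :: "'a^'n^'n" where
  "H_alpha = from_diag weight"

lemma conjugate_from_diag [simp]: "conjugate A (from_diag v) = diag_mat v"
  by (simp add: conjugate_conjugate_inv invertible_A)

lemma from_diag_eq_iff: "from_diag v = from_diag w \<longleftrightarrow> v = w"
  by (metis conjugate_from_diag diag_mat_eq_iff)

lemma trace_from_diag: "trace (from_diag v) = sum v UNIV"
  by (simp add: trace_conjugate invertible_matrix_inv invertible_A trace_diag_mat)

lemma from_diag_add: "from_diag v + from_diag w = from_diag (\<lambda>i. v i + w i)"
  by (simp add: conjugate_add[symmetric] diag_mat_add)

lemma mscale_from_diag: "mscale c (from_diag v) = from_diag (\<lambda>i. c * v i)"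
  by (simp add: conjugate_mscale[symmetric] mscale_diag_mat)

lemma sum_mscale_from_diag: "(\<Sum>x\<in>S. mscale (c x) (from_diag (v x))) = from_diag (\<lambda>i. \<Sum>x\<in>S. c x * v x i)"
  by (simp add: mscale_from_diag conjugate_sum[symmetric] sum_diag_mat)

lemma from_diag_mult: "from_diag v ** from_diag w = from_diag (\<lambda>i. v i * w i)"
  by (simp add: conjugate_mult[symmetric] invertible_matrix_inv invertible_A diag_mat_mult_diag_mat)

lemma trace_from_diag_mult: "trace (from_diag v ** from_diag w) = (\<Sum>i\<in>UNIV. v i * w i)"
  by (simp add: from_diag_mult trace_from_diag)

lemma eq_from_diag_if_diagonal:
  assumes "is_diagonal (conjugate A X)"
  shows "X = from_diag (\<lambda>i. conjugate A X $ i $ i)"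
proof -
  have "conjugate A X = diag_mat (\<lambda>i. conjugate A X $ i $ i)"
    using assms by (simp flip: is_diagonal_iff_diag_mat)
  then show ?thesis
    by (metis conjugate_inv_conjugate invertible_A)
qed

lemma weight_nonzero: "weight k \<noteq> 0"
  using alpha_pos[rule_format, of k] by simp

lemma weight_sum_nonzero: "(\<Sum>i\<in>UNIV. weight i) \<noteq> 0"
proof -
  obtain k :: 'n where True by simp
  have "\<alpha> k \<le> (\<Sum>i\<in>UNIV. \<alpha> i)" by (rule member_le_sum) auto
  then have "(\<Sum>i\<in>UNIV. \<alpha> i) \<noteq> 0"
    using alpha_pos[rule_format, of k] by linarith
  then show ?thesis
    unfolding of_nat_sum[symmetric] of_nat_eq_0_iff .
qed

lemma weight_square_sum_nonzero: "(\<Sum>i\<in>UNIV. weight i * weight i) \<noteq> 0"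
proof -
  obtain k :: 'n where True by simp
  have "\<alpha> k * \<alpha> k \<le> (\<Sum>i\<in>UNIV. \<alpha> i * \<alpha> i)" by (rule member_le_sum) auto
  moreover have "1 \<le> \<alpha> k * \<alpha> k" using alpha_pos[rule_format, of k] by simp
  ultimately have "(\<Sum>i\<in>UNIV. \<alpha> i * \<alpha> i) \<noteq> 0"
    by linarith
  then show ?thesis
    unfolding of_nat_mult[symmetric] of_nat_sum[symmetric] of_nat_eq_0_iff .
qed

lemma lie_alg_iff_conjugate: "M \<in> g \<longleftrightarrow> is_diagonal (conjugate A M) \<and> (\<Sum>k\<in>UNIV. weight k * conjugate A M $ k $ k) = 0"
  by (rule lie_alg_prod_lin_subst_iff[OF alpha_pos invertible_A])

lemma from_diag_in_lie_alg_iff: "from_diag v \<in> g \<longleftrightarrow> (\<Sum>k\<in>UNIV. weight k * v k) = 0"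
  by (simp add: lie_alg_iff_conjugate) (simp add: diag_mat_def)

(* from_diag (pair_weights k l) lies in g; commuting with it kills the (k, l) entry after
   conjugation by A. *)
definition pair_weights :: "'n \<Rightarrow> 'n \<Rightarrow> 'n \<Rightarrow> 'a" where
  "pair_weights k l i = (if i = k then weight l else if i = l then - weight k else 0)"

lemma sum_mult_pair_weights:
  assumes "k \<noteq> l"
  shows "(\<Sum>i\<in>UNIV. v i * pair_weights k l i) = v k * weight l - v l * weight k"
proof -
  have "(\<Sum>i\<in>UNIV. v i * pair_weights k l i) =
      (\<Sum>i\<in>UNIV. (if i = k then v k * weight l else 0) - (if i = l then v l * weight k else 0))"
    using assms by (intro sum.cong refl) (auto simp: pair_weights_def)
  then show ?thesis by (simp add: sum_subtractf)
qed

lemma from_diag_pair_weights_in_lie_alg: "k \<noteq> l \<Longrightarrow> from_diag (pair_weights k l) \<in> g"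
  by (simp add: from_diag_in_lie_alg_iff sum_mult_pair_weights[of k l weight] mult.commute)

lemma lie_alg_eq_from_diag: "g = from_diag ` {b. (\<Sum>k\<in>UNIV. weight k * b k) = 0}"
proof (intro set_eqI iffI)
  fix M
  assume M: "M \<in> g"
  then have "M = from_diag (\<lambda>i. conjugate A M $ i $ i)"
    by (simp add: lie_alg_iff_conjugate flip: eq_from_diag_if_diagonal)
  with M show "M \<in> from_diag ` {b. (\<Sum>k\<in>UNIV. weight k * b k) = 0}"
    by (metis (mono_tags, lifting) from_diag_in_lie_alg_iff image_eqI mem_Collect_eq)
qed (auto simp: from_diag_in_lie_alg_iff)

lemma diagonal_if_in_centralizer:
  assumes C: "C \<in> centralizer g"
  shows "is_diagonal (conjugate A C)"
  unfolding is_diagonal_def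
proof (intro allI impI)
  fix k l :: 'n
  assume "k \<noteq> l"
  let ?E = "conjugate A C" and ?D = "diag_mat (pair_weights k l)"
  have "C ** from_diag (pair_weights k l) = from_diag (pair_weights k l) ** C"
    using C from_diag_pair_weights_in_lie_alg[OF \<open>k \<noteq> l\<close>] by (simp add: centralizer_def)
  then have "conjugate A (C ** from_diag (pair_weights k l)) = conjugate A (from_diag (pair_weights k l) ** C)"
    by simp
  then have "?E ** ?D = ?D ** ?E"
    by (simp add: conjugate_mult invertible_A)
  then have "(?E ** ?D) $ k $ l = (?D ** ?E) $ k $ l"
    by simp
  then have "(weight k + weight l) * ?E $ k $ l = 0"
    using \<open>k \<noteq> l\<close>
    by (simp add: diag_mat_mult_left diag_mat_mult_right pair_weights_def algebra_simps neg_eq_iff_add_eq_0)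
  moreover have "weight k + weight l \<noteq> 0"
    unfolding of_nat_add[symmetric] of_nat_eq_0_iff using alpha_pos[rule_format, of k] by simp
  ultimately show "?E $ k $ l = 0"
    by simp
qed

lemma centralizer_eq_from_diag: "centralizer g = range from_diag"
proof (intro set_eqI iffI)
  fix C
  assume "C \<in> centralizer g"
  then have "C = from_diag (\<lambda>i. conjugate A C $ i $ i)"
    by (intro eq_from_diag_if_diagonal diagonal_if_in_centralizer)
  then show "C \<in> range from_diag" by blast
next
  fix C
  assume "C \<in> range from_diag"
  then show "C \<in> centralizer g"
    by (auto simp: centralizer_def lie_alg_eq_from_diag from_diag_mult mult.commute)
qed

lemma H_alpha_in_centralizer: "H_alpha \<in> centralizer g"
  by (simp add: H_alpha_def centralizer_eq_from_diag)

lemma H_alpha_similar_diag: "\<exists>P. invertible P \<and> H_alpha = P ** diag_mat weight ** matrix_inv P"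
  using invertible_matrix_inv[OF invertible_A] by (auto simp: H_alpha_def conjugate_def)

lemma trace_H_alpha: "trace H_alpha = of_nat (\<Sum>i\<in>UNIV. \<alpha> i)"
  by (simp add: H_alpha_def trace_from_diag)

lemma trace_H_alpha_mult: "M \<in> g \<Longrightarrow> trace (H_alpha ** M) = 0"
  by (auto simp: lie_alg_eq_from_diag H_alpha_def trace_from_diag_mult)

lemma trace_orthogonal_centralizer_unique:
  assumes "H \<in> centralizer g" "trace H = of_nat (\<Sum>i\<in>UNIV. \<alpha> i)" "\<forall>M\<in>g. trace (H ** M) = 0"
  shows "H = H_alpha"
proof -
  obtain e where H: "H = from_diag e"
    using assms(1) centralizer_eq_from_diag by auto
  have proportional: "e k * weight l = e l * weight k" for k l
  proof (cases "k = l")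
    case False
    have "0 = trace (H ** from_diag (pair_weights k l))"
      using assms(3) from_diag_pair_weights_in_lie_alg[OF False] by simp
    also have "\<dots> = e k * weight l - e l * weight k"
      by (simp add: H trace_from_diag_mult sum_mult_pair_weights[OF False])
    finally show ?thesis by simp
  qed simp
  obtain k0 :: 'n where True by simp
  define c where "c = e k0 / weight k0"
  have e: "e = (\<lambda>i. c * weight i)"
    using proportional[of _ k0] weight_nonzero[of k0] by (auto simp: c_def field_simps)
  have "c * (\<Sum>i\<in>UNIV. weight i) = 1 * (\<Sum>i\<in>UNIV. weight i)"
    using assms(2) by (simp add: H e trace_from_diag sum_distrib_left)
  then have "c = 1"
    using weight_sum_nonzero by (metis mult_cancel_right)
  then show ?thesis
    by (simp add: H e H_alpha_def)
qed

lemma centralizer_eq_lie_alg_plus_H_alpha: "centralizer g = {M + mscale c H_alpha | M c. M \<in> g}"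
proof (intro set_eqI iffI)
  fix C
  assume "C \<in> centralizer g"
  then obtain e where C: "C = from_diag e"
    using centralizer_eq_from_diag by auto
  define c where "c = (\<Sum>i\<in>UNIV. weight i * e i) / (\<Sum>i\<in>UNIV. weight i * weight i)"
  define b where "b i = e i - c * weight i" for i
  have "(\<Sum>i\<in>UNIV. weight i * b i) = (\<Sum>i\<in>UNIV. weight i * e i) - c * (\<Sum>i\<in>UNIV. weight i * weight i)"
    by (simp add: b_def algebra_simps sum_subtractf sum_distrib_left)
  also have "\<dots> = 0"
    using weight_square_sum_nonzero by (simp add: c_def)
  finally have "from_diag b \<in> g"
    by (simp add: from_diag_in_lie_alg_iff)
  moreover have "C = from_diag b + mscale c H_alpha"
    by (simp add: C H_alpha_def mscale_from_diag from_diag_add b_def)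
  ultimately show "C \<in> {M + mscale c H_alpha | M c. M \<in> g}"
    by blast
next
  fix C
  assume "C \<in> {M + mscale c H_alpha | M c. M \<in> g}"
  then show "C \<in> centralizer g"
    unfolding centralizer_eq_from_diag
    by (auto simp: lie_alg_eq_from_diag H_alpha_def mscale_from_diag from_diag_add)
qed

lemma lie_alg_inter_span_H_alpha: "g \<inter> mat.span {H_alpha} = {0}"
proof (intro set_eqI iffI)
  fix X
  assume "X \<in> g \<inter> mat.span {H_alpha}"
  then obtain c where X: "X = mscale c H_alpha" and "X \<in> g"
    by (auto simp: mat.span_singleton)
  then have "c * (\<Sum>i\<in>UNIV. weight i * weight i) = 0"
    by (simp add: H_alpha_def mscale_from_diag from_diag_in_lie_alg_iff sum_distrib_left mult_ac)
  then have "c = 0"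
    using weight_square_sum_nonzero by simp
  then show "X \<in> {0}"
    by (simp add: X vec_eq_iff mscale_def)
qed (simp add: mat.span_zero lie_alg_def)

lemma dim_centralizer: "mat.dim (centralizer g) = CARD('n)"
proof -
  define E where "E k = from_diag (\<lambda>i. if i = k then 1 else 0)" for k
  have lincomb: "(\<Sum>k\<in>S. mscale (c k) (E k)) = from_diag (\<lambda>i. if i \<in> S then c i else 0)" if "finite S" for S c
    using that by (simp add: E_def sum_mscale_from_diag if_distrib cong: if_cong)
  have "inj E"
    by (rule injI) (simp add: E_def from_diag_eq_iff fun_eq_iff, metis one_neq_zero)
  show ?thesis
  proof (rule mat.dim_unique[of "range E"])
    show "range E \<subseteq> centralizer g"
      by (auto simp: E_def centralizer_eq_from_diag)
    show "centralizer g \<subseteq> mat.span (range E)"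
    proof
      fix C
      assume "C \<in> centralizer g"
      then obtain e where "C = from_diag e"
        using centralizer_eq_from_diag by auto
      then have "C = (\<Sum>k\<in>UNIV. mscale (e k) (E k))"
        by (simp add: lincomb)
      then show "C \<in> mat.span (range E)"
        by (simp add: mat.span_sum mat.span_scale mat.span_base)
    qed
    show "mat.independent (range E)"
    proof (rule mat.independent_if_scalars_zero)
      fix u and X
      assume "(\<Sum>Y\<in>range E. mscale (u Y) Y) = 0" "X \<in> range E"
      then obtain k where "X = E k" and "from_diag (\<lambda>i. u (E i)) = 0"
        using lincomb[of UNIV "\<lambda>k. u (E k)"] by (auto simp: sum.reindex[OF \<open>inj E\<close>])
      then show "u X = 0"
        using from_diag_eq_iff[of "\<lambda>i. u (E i)" "\<lambda>i. 0"] by (simp add: fun_eq_iff)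
    qed simp
    show "card (range E) = CARD('n)"
      by (simp add: card_image[OF \<open>inj E\<close>])
  qed
qed

end

theorem proposition6:
  fixes \<alpha> :: "'n::finite \<Rightarrow> nat"
    and A :: "'a::field_char_0^'n^'n"
    and f :: "('n, 'a) mpoly"
  assumes alpha_pos: "\<forall>i. \<alpha> i \<ge> 1"
    and d_def: "d = (\<Sum>i\<in>UNIV. \<alpha> i)"
    and A_inv: "invertible A"
    and f_def: "f = (\<Prod>i\<in>UNIV. lin_subst A i ^ \<alpha> i)"
  shows "mat.dim (centralizer (lie_alg f)) = CARD('n)
    \<and> (\<exists>!H. H \<in> centralizer (lie_alg f) \<and> trace H = of_nat d
              \<and> (\<forall>M\<in>lie_alg f. trace (H ** M) = 0))
    \<and> (\<forall>H. H \<in> centralizer (lie_alg f) \<and> trace H = of_nat d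
              \<and> (\<forall>M\<in>lie_alg f. trace (H ** M) = 0)
          \<longrightarrow> (\<exists>P. invertible P \<and> H = P ** diag_mat (\<lambda>i. of_nat (\<alpha> i)) ** matrix_inv P)
              \<and> centralizer (lie_alg f) = {M + mscale c H | M c. M \<in> lie_alg f}
              \<and> lie_alg f \<inter> mat.span {H} = {0})"
proof -
  interpret linear_form_power_product A \<alpha>
    using alpha_pos A_inv by unfold_locales
  have characterization:
    "H \<in> centralizer (lie_alg f) \<and> trace H = of_nat d \<and> (\<forall>M\<in>lie_alg f. trace (H ** M) = 0)
      \<longleftrightarrow> H = H_alpha" for H
    using trace_orthogonal_centralizer_unique H_alpha_in_centralizer trace_H_alpha trace_H_alpha_mult
    unfolding f_def d_def by blast
  show ?thesis
    unfolding characterization unfolding f_def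
  proof (intro conjI allI impI)
    show "mat.dim (centralizer g) = CARD('n)"
      by (rule dim_centralizer)
    show "\<exists>!H. H = H_alpha"
      by simp
    fix H :: "'a^'n^'n"
    assume "H = H_alpha"
    then show "\<exists>P. invertible P \<and> H = P ** diag_mat (\<lambda>i. of_nat (\<alpha> i)) ** matrix_inv P"
      "centralizer g = {M + mscale c H | M c. M \<in> g}" "g \<inter> mat.span {H} = {0}"
      using H_alpha_similar_diag centralizer_eq_lie_alg_plus_H_alpha lie_alg_inter_span_H_alpha
      by simp_all
  qed
qed

end
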